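(* Let $(X,d)$ be a compact metric space and let $f\in\mathcal{H}(X)$ be equicontinuous. If $\dim X=0$ and $X=\overline{Per(f)}$, then $f$ has the periodic shadowing property.
   Context: Equicontinuous: for every $\epsilon>0$ there is $\delta>0$ with $d(x,y)\le\delta\Rightarrow\sup_{i\in\mathbb{Z}}d(f^i(x),f^i(y))\le\epsilon$. $Per(f)$ is the set of periodic points. $f$ has the periodic shadowing property if for every $\epsilon>0$ there is $\delta>0$ such that for every $(x_i)_{i=0}^m$, $m\ge1$, with $d(f(x_i),x_{i+1})\le\delta$ for $0\le i<m$ and $x_0=x_m$, there is $p\in Per(f)$ with $d(x_i,f^i(p))\le\epsilon$ for $0\le i\le m$. *)

theory Defs
  imports "HOL-Analysis.Analysis"
begin

definition zint_iter :: "'a set \<Rightarrow> ('a \<Rightarrow> 'a) \<Rightarrow> int \<Rightarrow> 'a \<Rightarrow> 'a" where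
  "zint_iter X f i = (if 0 \<le> i then f ^^ nat i else (inv_into X f) ^^ nat (- i))"

definition equicontinuous_homeo :: "'a::metric_space set \<Rightarrow> ('a \<Rightarrow> 'a) \<Rightarrow> bool" where
  "equicontinuous_homeo X f \<longleftrightarrow>
     (\<forall>e>0. \<exists>\<delta>>0. \<forall>x\<in>X. \<forall>y\<in>X. dist x y \<le> \<delta> \<longrightarrow>
        (\<forall>i::int. dist (zint_iter X f i x) (zint_iter X f i y) \<le> e))"

definition Per :: "'a set \<Rightarrow> ('a \<Rightarrow> 'a) \<Rightarrow> 'a set" where
  "Per X f = {x \<in> X. \<exists>n>0. (f ^^ n) x = x}"

text \<open>Topological dimension zero (small inductive dimension 0):
  X is nonempty and has a base of clopen subsets.\<close>
definition dim_zero :: "'a::topological_space set \<Rightarrow> bool" where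
  "dim_zero X \<longleftrightarrow> X \<noteq> {} \<and>
     (\<forall>x\<in>X. \<forall>U. openin (top_of_set X) U \<and> x \<in> U \<longrightarrow>
        (\<exists>V. openin (top_of_set X) V \<and> closedin (top_of_set X) V \<and> x \<in> V \<and> V \<subseteq> U))"

definition periodic_shadowing :: "'a::metric_space set \<Rightarrow> ('a \<Rightarrow> 'a) \<Rightarrow> bool" where
  "periodic_shadowing X f \<longleftrightarrow>
     (\<forall>e>0. \<exists>\<delta>>0. \<forall>m::nat. \<forall>xs::nat \<Rightarrow> 'a.
        m \<ge> 1 \<and> (\<forall>i\<le>m. xs i \<in> X) \<and> (\<forall>i<m. dist (f (xs i)) (xs (Suc i)) \<le> \<delta>) \<and> xs 0 = xs m
        \<longrightarrow> (\<exists>p\<in>Per X f. \<forall>i\<le>m. dist (xs i) ((f ^^ i) p) \<le> e))"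

end

theory Submission
  imports Defs
begin

text \<open>Cover X by finitely many clopen sets of diameter at most \<open>e\<close>. Clopen sets are uniformly
  separated in a compact space, so for some \<open>\<eta>\<close> points closer than \<open>\<eta>\<close> lie in the same cover
  elements, and by equicontinuity there is \<open>\<delta>\<close> such that \<open>\<delta>\<close>-close points have the same
  itinerary through the cover forever. Along a \<open>\<delta>\<close>-pseudo-orbit the itinerary of a point is
  therefore passed on from step to step, so a periodic point \<open>\<delta>\<close>-close to the first point of the
  pseudo-orbit visits the same cover elements as the pseudo-orbit, and stays \<open>e\<close>-close to it.\<close>

lemma dim_zero_clopen_neighbourhood:
  assumes "dim_zero X" "openin (top_of_set X) U" "x \<in> U"
  obtains V where "openin (top_of_set X) V" "closedin (top_of_set X) V" "x \<in> V" "V \<subseteq> U"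
proof -
  have "x \<in> X"
    using assms(2,3) openin_imp_subset by fastforce
  with assms show thesis
    using that unfolding dim_zero_def by blast
qed

lemma dim_zero_clopen_in_ball:
  fixes X :: "'a::metric_space set"
  assumes "dim_zero X" "x \<in> X" "r > 0"
  obtains T where "open T" "closedin (top_of_set X) (X \<inter> T)" "x \<in> T" "X \<inter> T \<subseteq> ball x r"
proof -
  have "openin (top_of_set X) (X \<inter> ball x r)" "x \<in> X \<inter> ball x r"
    using assms(2,3) by (auto simp: openin_open_Int)
  then obtain V where V: "openin (top_of_set X) V" "closedin (top_of_set X) V" "x \<in> V"
    "V \<subseteq> X \<inter> ball x r"
    using dim_zero_clopen_neighbourhood[OF assms(1)] by blast
  then obtain T where "open T" "V = X \<inter> T"
    by (meson openin_open)
  with V show thesis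
    using that by blast
qed

lemma dim_zero_finite_clopen_cover:
  fixes X :: "'a::metric_space set"
  assumes "compact X" "dim_zero X" "e > 0"
  obtains C where "finite C" "X \<subseteq> \<Union>C"
    "\<And>U. U \<in> C \<Longrightarrow> openin (top_of_set X) U \<and> closedin (top_of_set X) U"
    "\<And>U a b. U \<in> C \<Longrightarrow> a \<in> U \<Longrightarrow> b \<in> U \<Longrightarrow> dist a b \<le> e"
proof -
  have "\<exists>T. open T \<and> closedin (top_of_set X) (X \<inter> T) \<and> x \<in> T \<and> X \<inter> T \<subseteq> ball x (e/2)"
    if "x \<in> X" for x
    using dim_zero_clopen_in_ball[OF assms(2) that, of "e/2"] \<open>e > 0\<close> by auto
  then obtain T where T: "\<And>x. x \<in> X \<Longrightarrow> open (T x) \<and> closedin (top_of_set X) (X \<inter> T x)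
      \<and> x \<in> T x \<and> X \<inter> T x \<subseteq> ball x (e/2)"
    by metis
  have "X \<subseteq> (\<Union>x\<in>X. T x)"
    using T by blast
  then obtain K where K: "K \<subseteq> X" "finite K" "X \<subseteq> (\<Union>x\<in>K. T x)"
    using compactE_image[OF assms(1), of X T] T by blast
  show thesis
  proof
    show "finite ((\<lambda>x. X \<inter> T x) ` K)"
      using K(2) by simp
    show "X \<subseteq> \<Union>((\<lambda>x. X \<inter> T x) ` K)"
      using K by blast
    show "openin (top_of_set X) U \<and> closedin (top_of_set X) U" if "U \<in> (\<lambda>x. X \<inter> T x) ` K" for U
      using that K T by (auto simp: openin_open_Int)
    show "dist a b \<le> e" if U: "U \<in> (\<lambda>x. X \<inter> T x) ` K" and ab: "a \<in> U" "b \<in> U" for U a b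
    proof -
      obtain x where "x \<in> K" "U = X \<inter> T x"
        using U by blast
      then have "a \<in> ball x (e/2)" "b \<in> ball x (e/2)"
        using K(1) T ab by blast+
      then have "dist x a < e/2" "dist x b < e/2"
        by simp_all
      then show ?thesis
        using dist_triangle[of a b x] by (simp add: dist_commute)
    qed
  qed
qed

lemma clopen_uniformly_separated:
  fixes X :: "'a::metric_space set"
  assumes "compact X" "openin (top_of_set X) U" "closedin (top_of_set X) U"
  obtains \<eta> where "\<eta> > 0" "\<And>x y. x \<in> X \<Longrightarrow> y \<in> X \<Longrightarrow> dist x y < \<eta> \<Longrightarrow> x \<in> U \<longleftrightarrow> y \<in> U"
proof -
  obtain T where T: "open T" "U = X \<inter> T"
    using assms(2) by (meson openin_open)
  have "openin (top_of_set X) (X - U)"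
    using assms(3) by (simp add: openin_diff)
  then obtain T' where T': "open T'" "X - U = X \<inter> T'"
    by (meson openin_open)
  have "X \<subseteq> \<Union>{T, T'}"
    using T T' by blast
  then obtain \<eta> where "\<eta> > 0" and \<eta>: "\<And>x. x \<in> X \<Longrightarrow> \<exists>G \<in> {T, T'}. ball x \<eta> \<subseteq> G"
    using Heine_Borel_lemma[OF assms(1)] T T' by (metis empty_iff insert_iff)
  show thesis
  proof
    show "\<eta> > 0" by fact
    show "x \<in> U \<longleftrightarrow> y \<in> U" if "x \<in> X" "y \<in> X" "dist x y < \<eta>" for x y
    proof -
      obtain G where "G \<in> {T, T'}" "ball x \<eta> \<subseteq> G"
        using \<eta> \<open>x \<in> X\<close> by blast
      moreover have "x \<in> ball x \<eta>" "y \<in> ball x \<eta>"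
        using \<open>\<eta> > 0\<close> \<open>dist x y < \<eta>\<close> by auto
      ultimately show ?thesis
        using T T' that by blast
    qed
  qed
qed

lemma finite_clopen_uniformly_separated:
  fixes X :: "'a::metric_space set"
  assumes "compact X" "finite C"
    and "\<And>U. U \<in> C \<Longrightarrow> openin (top_of_set X) U \<and> closedin (top_of_set X) U"
  obtains \<eta> where "\<eta> > 0" "\<And>x y U. x \<in> X \<Longrightarrow> y \<in> X \<Longrightarrow> dist x y < \<eta> \<Longrightarrow> U \<in> C \<Longrightarrow> x \<in> U \<longleftrightarrow> y \<in> U"
  using assms(2,3)
proof (induction C arbitrary: thesis rule: finite_induct)
  case empty
  show ?case
    using empty(1)[of 1] by simp
next
  case (insert U C)
  obtain \<eta>1 where "\<eta>1 > 0"
    and \<eta>1: "\<And>x y V. x \<in> X \<Longrightarrow> y \<in> X \<Longrightarrow> dist x y < \<eta>1 \<Longrightarrow> V \<in> C \<Longrightarrow> x \<in> V \<longleftrightarrow> y \<in> V"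
    using insert.IH insert.prems(2) by blast
  obtain \<eta>2 where "\<eta>2 > 0"
    and \<eta>2: "\<And>x y. x \<in> X \<Longrightarrow> y \<in> X \<Longrightarrow> dist x y < \<eta>2 \<Longrightarrow> x \<in> U \<longleftrightarrow> y \<in> U"
    using clopen_uniformly_separated[OF assms(1)] insert.prems(2) by blast
  show ?case
  proof (rule insert.prems(1))
    show "min \<eta>1 \<eta>2 > 0"
      using \<open>\<eta>1 > 0\<close> \<open>\<eta>2 > 0\<close> by simp
    show "x \<in> V \<longleftrightarrow> y \<in> V"
      if "x \<in> X" "y \<in> X" "dist x y < min \<eta>1 \<eta>2" "V \<in> insert U C" for x y V
      using that(4) \<eta>1[OF that(1,2)] \<eta>2[OF that(1,2)] that(3) by auto
  qed
qed

lemma equicontinuous_homeo_funpow: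
  assumes "equicontinuous_homeo X f" "e > 0"
  obtains \<delta> where "\<delta> > 0"
    "\<And>x y n. x \<in> X \<Longrightarrow> y \<in> X \<Longrightarrow> dist x y \<le> \<delta> \<Longrightarrow> dist ((f ^^ n) x) ((f ^^ n) y) \<le> e"
proof -
  obtain \<delta> where "\<delta> > 0" and \<delta>: "\<forall>x\<in>X. \<forall>y\<in>X. dist x y \<le> \<delta> \<longrightarrow>
      (\<forall>i::int. dist (zint_iter X f i x) (zint_iter X f i y) \<le> e)"
    using assms unfolding equicontinuous_homeo_def by blast
  have "dist ((f ^^ n) x) ((f ^^ n) y) \<le> e" if "x \<in> X" "y \<in> X" "dist x y \<le> \<delta>" for x y n
  proof -
    have "dist (zint_iter X f (int n) x) (zint_iter X f (int n) y) \<le> e"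
      using \<delta> that by blast
    then show ?thesis
      by (simp add: zint_iter_def)
  qed
  with \<open>\<delta> > 0\<close> show thesis
    using that by blast
qed

definition same_itinerary :: "'a set set \<Rightarrow> ('a \<Rightarrow> 'a) \<Rightarrow> 'a \<Rightarrow> 'a \<Rightarrow> bool" where
  "same_itinerary C f x y \<longleftrightarrow> (\<forall>n. \<forall>U\<in>C. (f ^^ n) x \<in> U \<longleftrightarrow> (f ^^ n) y \<in> U)"

lemma same_itinerary_trans:
  "same_itinerary C f x y \<Longrightarrow> same_itinerary C f y z \<Longrightarrow> same_itinerary C f x z"
  unfolding same_itinerary_def by blast

lemma same_itinerary_apply:
  assumes "same_itinerary C f x y"
  shows "same_itinerary C f (f x) (f y)"
  unfolding same_itinerary_def
proof (intro allI ballI)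
  fix n U assume "U \<in> C"
  then have "(f ^^ Suc n) x \<in> U \<longleftrightarrow> (f ^^ Suc n) y \<in> U"
    using assms unfolding same_itinerary_def by blast
  then show "(f ^^ n) (f x) \<in> U \<longleftrightarrow> (f ^^ n) (f y) \<in> U"
    by (simp only: funpow_Suc_right o_apply)
qed

lemma equicontinuous_homeo_same_itinerary:
  fixes X :: "'a::metric_space set"
  assumes "compact X" "f ` X \<subseteq> X" "equicontinuous_homeo X f" "finite C"
    and "\<And>U. U \<in> C \<Longrightarrow> openin (top_of_set X) U \<and> closedin (top_of_set X) U"
  obtains \<delta> where "\<delta> > 0" "\<And>x y. x \<in> X \<Longrightarrow> y \<in> X \<Longrightarrow> dist x y \<le> \<delta> \<Longrightarrow> same_itinerary C f x y"
proof -
  obtain \<eta> where "\<eta> > 0"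
    and \<eta>: "\<And>x y U. x \<in> X \<Longrightarrow> y \<in> X \<Longrightarrow> dist x y < \<eta> \<Longrightarrow> U \<in> C \<Longrightarrow> x \<in> U \<longleftrightarrow> y \<in> U"
    using finite_clopen_uniformly_separated[OF assms(1,4,5)] by blast
  obtain \<delta> where "\<delta> > 0"
    and \<delta>: "\<And>x y n. x \<in> X \<Longrightarrow> y \<in> X \<Longrightarrow> dist x y \<le> \<delta> \<Longrightarrow> dist ((f ^^ n) x) ((f ^^ n) y) \<le> \<eta>/2"
    using equicontinuous_homeo_funpow[OF assms(3), of "\<eta>/2"] \<open>\<eta> > 0\<close> by auto
  have iter_X: "(f ^^ n) x \<in> X" if "x \<in> X" for x n
    using that assms(2) by (induction n) auto
  have "same_itinerary C f x y" if "x \<in> X" "y \<in> X" "dist x y \<le> \<delta>" for x y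
    unfolding same_itinerary_def
  proof (intro allI ballI)
    fix n U assume "U \<in> C"
    have "dist ((f ^^ n) x) ((f ^^ n) y) < \<eta>"
      using \<delta>[OF that, of n] \<open>\<eta> > 0\<close> by linarith
    then show "(f ^^ n) x \<in> U \<longleftrightarrow> (f ^^ n) y \<in> U"
      using \<eta> iter_X that \<open>U \<in> C\<close> by blast
  qed
  with \<open>\<delta> > 0\<close> show thesis
    using that by blast
qed

lemma pseudo_orbit_shadowed_by_same_itinerary:
  assumes "f ` X \<subseteq> X" "X \<subseteq> \<Union>C"
    and small: "\<And>U a b. U \<in> C \<Longrightarrow> a \<in> U \<Longrightarrow> b \<in> U \<Longrightarrow> dist a b \<le> e"
    and close: "\<And>x y. x \<in> X \<Longrightarrow> y \<in> X \<Longrightarrow> dist x y \<le> \<delta> \<Longrightarrow> same_itinerary C f x y"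
    and xs: "\<forall>i\<le>m. xs i \<in> X" "\<forall>i<m. dist (f (xs i)) (xs (Suc i)) \<le> \<delta>"
    and p: "p \<in> X" "dist p (xs 0) \<le> \<delta>"
  shows "\<forall>i\<le>m. dist (xs i) ((f ^^ i) p) \<le> e"
proof (intro allI impI)
  fix i assume "i \<le> m"
  then have itinerary: "same_itinerary C f ((f ^^ i) p) (xs i)"
  proof (induction i)
    case 0
    show ?case
      using close[OF p(1) _ p(2)] xs(1) by simp
  next
    case (Suc i)
    then have "same_itinerary C f ((f ^^ i) p) (xs i)"
      by simp
    then have "same_itinerary C f ((f ^^ Suc i) p) (f (xs i))"
      using same_itinerary_apply by fastforce
    moreover have "same_itinerary C f (f (xs i)) (xs (Suc i))"
    proof (rule close)
      have "i < m"
        using Suc.prems by simp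
      then show "f (xs i) \<in> X" "xs (Suc i) \<in> X" "dist (f (xs i)) (xs (Suc i)) \<le> \<delta>"
        using xs assms(1) by auto
    qed
    ultimately show ?case
      by (rule same_itinerary_trans)
  qed
  obtain U where "U \<in> C" "xs i \<in> U"
    using assms(2) xs(1) \<open>i \<le> m\<close> by blast
  moreover have "(f ^^ i) p \<in> U"
    using itinerary[unfolded same_itinerary_def, rule_format, where n=0 and U=U] calculation by simp
  ultimately show "dist (xs i) ((f ^^ i) p) \<le> e"
    by (rule small)
qed

theorem lemma5p1:
  fixes X :: "'a::metric_space set" and f :: "'a \<Rightarrow> 'a"
  assumes "compact X"
    and "\<exists>g. homeomorphism X X f g"
    and "equicontinuous_homeo X f"
    and "dim_zero X"
    and "closure (Per X f) = X"
  shows "periodic_shadowing X f"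
  unfolding periodic_shadowing_def
proof (intro allI impI)
  fix e :: real assume "e > 0"
  have fX: "f ` X \<subseteq> X"
    using assms(2) homeomorphism_image1 by blast
  obtain C where C: "finite C" "X \<subseteq> \<Union>C"
    "\<And>U. U \<in> C \<Longrightarrow> openin (top_of_set X) U \<and> closedin (top_of_set X) U"
    "\<And>U a b. U \<in> C \<Longrightarrow> a \<in> U \<Longrightarrow> b \<in> U \<Longrightarrow> dist a b \<le> e"
    using dim_zero_finite_clopen_cover[OF assms(1,4) \<open>e > 0\<close>] by blast
  obtain \<delta> where "\<delta> > 0"
    and \<delta>: "\<And>x y. x \<in> X \<Longrightarrow> y \<in> X \<Longrightarrow> dist x y \<le> \<delta> \<Longrightarrow> same_itinerary C f x y"
    using equicontinuous_homeo_same_itinerary[OF assms(1) fX assms(3) C(1,3)] by blast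
  have "\<exists>p\<in>Per X f. \<forall>i\<le>m. dist (xs i) ((f ^^ i) p) \<le> e"
    if xs: "\<forall>i\<le>m. xs i \<in> X" "\<forall>i<m. dist (f (xs i)) (xs (Suc i)) \<le> \<delta>" for m xs
  proof -
    obtain p where p: "p \<in> Per X f" "dist (xs 0) p < \<delta>"
      using closure_approachableD[of "xs 0" "Per X f" \<delta>] xs(1) assms(5) \<open>\<delta> > 0\<close> by auto
    have p_start: "p \<in> X" "dist p (xs 0) \<le> \<delta>"
      using p by (auto simp: Per_def dist_commute)
    have "\<forall>i\<le>m. dist (xs i) ((f ^^ i) p) \<le> e"
      by (rule pseudo_orbit_shadowed_by_same_itinerary[OF fX C(2)]) (fact C(4) \<delta> xs p_start)+
    with p(1) show ?thesis
      by blast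
  qed
  with \<open>\<delta> > 0\<close> show "\<exists>\<delta>>0. \<forall>m xs. 1 \<le> m \<and> (\<forall>i\<le>m. xs i \<in> X)
      \<and> (\<forall>i<m. dist (f (xs i)) (xs (Suc i)) \<le> \<delta>) \<and> xs 0 = xs m
      \<longrightarrow> (\<exists>p\<in>Per X f. \<forall>i\<le>m. dist (xs i) ((f ^^ i) p) \<le> e)"
    by blast
qed

end
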